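(* Let $\mathcal C\subseteq 2^{[n]}$ be a $k$-inductively pierced code. Then $\mathcal C$ has a well-formed realization by open balls in $\mathbb R^{k+1}$ with the property that every interval of rank at most $k$ contained in $\mathcal C$ is pierceable at some point.
   Context: A code is a set $\mathcal C\subseteq 2^{[n]}$, $[n]=\{1,\dots,n\}$. Standing conventions: $\emptyset\in\mathcal C$; every neuron lies in some codeword; no two distinct neurons lie in exactly the same codewords. $\mathcal C\setminus i$ is obtained by removing $i$ from every codeword. For $\alpha\subseteq\beta$, $[\alpha,\beta]=\{\gamma:\alpha\subseteq\gamma\subseteq\beta\}$, of rank $|\beta\setminus\alpha|$. A neuron $i$ is a $k$-piercing of $\mathcal C$ if there are $\sigma\subseteq\tau\subseteq[n]\setminus\{i\}$ with $[\sigma,\tau]$ of rank $k$, $[\sigma,\tau]\subseteq\mathcal C\setminus i$, and $\mathcal C=(\mathcal C\setminus i)\cup[\sigma\cup\{i\},\tau\cup\{i\}]$. A code is $k$-inductively pierced if $\mathcal C=\{\emptyset\}$, or some neuron $i$ is a $k'$-piercing for some $k'\le k$ and $\mathcal C\setminus i$ is $k$-inductively pierced. For sets $U_1,\dots,U_n\subseteq\mathbb R^d$, the atom of $\gamma$ is $\bigcap_{i\in\gamma}U_i\setminus\bigcup_{j\notin\gamma}U_j$; the collection realizes $\mathcal C$ if $\mathcal C$ is exactly the set of $\gamma$ with nonempty atom. In a realization of $\mathcal C$, an interval $[\alpha,\beta]\subseteq\mathcal C$ is pierceable at $p$ if $p$ is a limit point of the atom of every codeword in $[\alpha,\beta]$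 and of no other atom. A collection of $(d-1)$-spheres in $\mathbb R^d$ is well-formed if for every $m\le d$ the intersection of any $m$ of them is empty or a $(d-m)$-dimensional sphere, and the intersection of any $d+1$ of them is empty; open balls are well-formed if their boundary spheres are. *)

theory Defs
  imports "HOL-Analysis.Analysis"
begin

text \<open>Codes are sets of finite sets of neurons (neurons are natural numbers 1..n).\<close>

definition code_interval :: "nat set \<Rightarrow> nat set \<Rightarrow> nat set set" where
  "code_interval \<alpha> \<beta> = {\<gamma>. \<alpha> \<subseteq> \<gamma> \<and> \<gamma> \<subseteq> \<beta>}"

definition code_del :: "nat set set \<Rightarrow> nat \<Rightarrow> nat set set" where
  "code_del C i = (\<lambda>c. c - {i}) ` C"

definition is_piercing :: "nat set set \<Rightarrow> nat \<Rightarrow> nat \<Rightarrow> bool" where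
  "is_piercing C i k \<longleftrightarrow>
     (\<exists>\<sigma> \<tau>. \<sigma> \<subseteq> \<tau> \<and> finite \<tau> \<and> i \<notin> \<tau> \<and> card (\<tau> - \<sigma>) = k \<and>
        code_interval \<sigma> \<tau> \<subseteq> code_del C i \<and>
        C = code_del C i \<union> code_interval (insert i \<sigma>) (insert i \<tau>))"

inductive k_inductively_pierced :: "nat \<Rightarrow> nat set set \<Rightarrow> bool" for k where
  base: "k_inductively_pierced k {{}}"
| step: "is_piercing C i k' \<Longrightarrow> k' \<le> k \<Longrightarrow> k_inductively_pierced k (code_del C i)
          \<Longrightarrow> k_inductively_pierced k C"

definition atom :: "(nat \<Rightarrow> 'a set) \<Rightarrow> nat \<Rightarrow> nat set \<Rightarrow> 'a set" where
  "atom U n \<gamma> = (\<Inter>i\<in>\<gamma>. U i) - (\<Union>j\<in>{1..n} - \<gamma>. U j)"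

definition realizes :: "(nat \<Rightarrow> 'a set) \<Rightarrow> nat \<Rightarrow> nat set set \<Rightarrow> bool" where
  "realizes U n C \<longleftrightarrow> C = {\<gamma>. \<gamma> \<subseteq> {1..n} \<and> atom U n \<gamma> \<noteq> {}}"

definition is_dim_sphere :: "nat \<Rightarrow> 'a::euclidean_space set \<Rightarrow> bool" where
  "is_dim_sphere j X \<longleftrightarrow>
     (\<exists>c r A. 0 < r \<and> affine A \<and> c \<in> A \<and> aff_dim A = int j + 1 \<and> X = sphere c r \<inter> A)"

definition well_formed_balls :: "nat \<Rightarrow> (nat \<Rightarrow> 'a::euclidean_space) \<Rightarrow> (nat \<Rightarrow> real) \<Rightarrow> bool" where
  "well_formed_balls n c r \<longleftrightarrow>
     (\<forall>S \<subseteq> {1..n}.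
        (1 \<le> card S \<and> card S \<le> DIM('a) \<longrightarrow>
           (\<Inter>i\<in>S. sphere (c i) (r i)) = {} \<or>
           is_dim_sphere (DIM('a) - card S) (\<Inter>i\<in>S. sphere (c i) (r i))) \<and>
        (card S = DIM('a) + 1 \<longrightarrow> (\<Inter>i\<in>S. sphere (c i) (r i)) = {}))"

definition pierceable_at :: "(nat \<Rightarrow> 'a::topological_space set) \<Rightarrow> nat \<Rightarrow> nat set \<Rightarrow> nat set \<Rightarrow> 'a \<Rightarrow> bool" where
  "pierceable_at U n \<alpha> \<beta> p \<longleftrightarrow>
     (\<forall>\<gamma>. \<gamma> \<subseteq> {1..n} \<longrightarrow> (p islimpt atom U n \<gamma> \<longleftrightarrow> \<gamma> \<in> code_interval \<alpha> \<beta>))"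

end

theory Submission
  imports Defs
begin

(* Induction along the piercing order, carrying a stronger invariant than pierceability: every
   interval [\<alpha>, \<beta>] of rank at most k in the code has a transversal point, i.e. a point lying on
   exactly the spheres of \<beta> - \<alpha> with linearly independent normals there, inside the balls of \<alpha>
   and outside all other closed balls.  Since the rank is below the dimension k + 1, one can move
   from such a point into or out of each of these spheres independently, so every atom of
   [\<alpha>, \<beta>] accumulates at it.
   When neuron i pierces [\<sigma>, \<tau>], its ball is a small ball around a transversal point p of
   [\<sigma>, \<tau>]: inside it lie the atoms of [\<sigma>, \<tau>] with i added, its boundary sphere meets the
   spheres of [\<sigma>, \<tau>] transversally, it misses the transversal points of all other intervals, and
   it cuts each sphere intersection through p in a sphere of one dimension less. *)


section \<open>Linear algebra\<close>

lemma independent_insert_translates: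
  fixes n :: "'i \<Rightarrow> 'a::euclidean_space"
  assumes fin: "finite J" and inj: "inj_on n J" and ind: "independent (n ` J)"
    and v: "v \<notin> span (n ` J)"
  shows "inj_on (\<lambda>j. n j + v) J \<and> v \<notin> (\<lambda>j. n j + v) ` J
    \<and> independent (insert v ((\<lambda>j. n j + v) ` J))"
proof -
  define B where "B = insert v ((\<lambda>j. n j + v) ` J)"
  have "span B = span (insert v (n ` J))"
  proof (rule span_eq[THEN iffD2], intro conjI subsetI)
    fix x assume "x \<in> B"
    then consider "x = v" | j where "j \<in> J" "x = n j + v" unfolding B_def by blast
    then show "x \<in> span (insert v (n ` J))"
      by cases (simp_all add: span_base span_add)
  next
    fix x assume "x \<in> insert v (n ` J)"
    then consider "x = v" | j where "j \<in> J" "x = (n j + v) - v" by auto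
    then show "x \<in> span B"
    proof cases
      case 2
      then show ?thesis unfolding B_def by (metis span_diff span_base insertI1 insertI2 imageI)
    qed (simp add: B_def span_base)
  qed
  moreover have "independent (insert v (n ` J))"
    using ind v by (rule independent_insertI[rotated])
  moreover have "v \<notin> n ` J" using v span_base[of v "n ` J"] by argo
  ultimately have dimB: "dim (span B) = card J + 1"
    using fin inj by (simp add: dim_span dim_eq_card_independent card_image)
  have finB: "finite B" unfolding B_def using fin by simp
  have cardB: "card B \<le> card J + 1"
    unfolding B_def using card_image_le[OF fin, of "\<lambda>j. n j + v"] fin
    by (simp add: card_insert_if)
  have indB: "independent B"
    using finB cardB dimB by (intro card_le_dim_spanning[of B "span B"]) (simp_all add: span_superset)
  then have "card B = card J + 1" using dimB by (simp add: dim_eq_card_independent)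
  then have "v \<notin> (\<lambda>j. n j + v) ` J \<and> card ((\<lambda>j. n j + v) ` J) = card J"
    using card_image_le[OF fin, of "\<lambda>j. n j + v"] fin unfolding B_def
    by (cases "v \<in> (\<lambda>j. n j + v) ` J") (simp_all add: insert_absorb)
  then show ?thesis using indB eq_card_imp_inj_on[OF fin, of "\<lambda>j. n j + v"] unfolding B_def by simp
qed

lemma exists_inner_eq_on_independent:
  fixes n :: "'i \<Rightarrow> 'a::euclidean_space"
  assumes inj: "inj_on n J" and ind: "independent (n ` J)"
  shows "\<exists>a\<in>span (n ` J). \<forall>j\<in>J. a \<bullet> n j = b j"
proof -
  obtain g :: "'a \<Rightarrow> real" where g: "linear g" "\<And>j. j \<in> J \<Longrightarrow> g (n j) = b j"
    using linear_independent_extend[OF ind, of "\<lambda>x. b (the_inv_into J n x)"]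
    by (auto simp: the_inv_into_f_f[OF inj])
  define a0 where "a0 = adjoint g 1"
  have a0: "a0 \<bullet> x = g x" for x
    using adjoint_clauses(2)[OF g(1), of 1 x] by (simp add: a0_def)
  obtain y z where yz: "y \<in> span (n ` J)" "\<And>w. w \<in> span (n ` J) \<Longrightarrow> orthogonal z w" "a0 = y + z"
    using orthogonal_subspace_decomp_exists by blast
  have "y \<bullet> n j = b j" if "j \<in> J" for j
  proof -
    have "z \<bullet> n j = 0" using yz(2)[OF span_base] that by (simp add: orthogonal_def)
    then show ?thesis using a0[of "n j"] g(2)[OF that] by (simp add: yz(3) inner_add_left)
  qed
  then show ?thesis using yz(1) by blast
qed

lemma unit_vector_off_subspace:
  fixes a w :: "'a::euclidean_space"
  assumes a: "a \<in> span B" and w: "norm w = 1" "\<And>y. y \<in> span B \<Longrightarrow> w \<bullet> y = 0"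
    and t: "\<bar>t * norm a\<bar> < 1"
  obtains u where "norm u = 1" "u \<notin> span B" "\<And>y. y \<in> span B \<Longrightarrow> u \<bullet> y = t * (a \<bullet> y)"
proof
  define m where "m = sqrt (1 - (t * norm a)\<^sup>2)"
  have "(t * norm a)\<^sup>2 < 1" using t by (simp add: abs_square_less_1)
  then have m: "0 < m" "m\<^sup>2 = 1 - (t * norm a)\<^sup>2" unfolding m_def by simp_all
  define u where "u = t *\<^sub>R a + m *\<^sub>R w"
  have "a \<bullet> w = 0" using w(2)[OF a] by (simp add: inner_commute)
  then have "(norm u)\<^sup>2 = t\<^sup>2 * (a \<bullet> a) + m\<^sup>2 * (w \<bullet> w)"
    unfolding u_def power2_norm_eq_inner
    by (simp add: inner_add_left inner_add_right inner_commute power2_eq_square algebra_simps)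
  also have "\<dots> = 1"
    using w(1) m(2) by (simp add: power2_norm_eq_inner[symmetric] power_mult_distrib)
  finally show "norm u = 1" using norm_ge_zero[of u] by (auto simp: power2_eq_1_iff)
  show "u \<notin> span B"
  proof
    assume "u \<in> span B"
    then have "(1 / m) *\<^sub>R (u - t *\<^sub>R a) \<in> span B"
      using a by (intro span_scale span_diff span_scale)
    then have "w \<in> span B" using m(1) by (simp add: u_def)
    then show False using w by (simp add: norm_eq_sqrt_inner)
  qed
  show "u \<bullet> y = t * (a \<bullet> y)" if "y \<in> span B" for y
    using w(2)[OF that] by (simp add: u_def inner_add_left)
qed

section \<open>Limits at the right of zero\<close>

lemma eventually_at_right_0_ex:
  assumes "\<forall>\<^sub>F t in at_right (0::real). P t"
  shows "\<exists>t>0. P t"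
proof -
  have "\<forall>\<^sub>F t in at_right (0::real). 0 < t \<and> P t"
    using eventually_at_right_less assms by (rule eventually_conj)
  then show ?thesis by (blast dest: eventually_happens'[OF trivial_limit_at_right_real])
qed

lemma eventually_add_less_finite:
  fixes f g :: "'i \<Rightarrow> real"
  assumes "finite K" "\<forall>j\<in>K. f j < g j"
  shows "\<forall>\<^sub>F t in at_right 0. \<forall>j\<in>K. f j + t < g j"
proof (rule eventually_ball_finite[OF assms(1)], intro ballI)
  fix j assume "j \<in> K"
  then have "\<forall>\<^sub>F t in at_right 0. t \<in> {0<..<g j - f j}"
    using assms(2) by (intro eventually_at_right_real) simp
  then show "\<forall>\<^sub>F t in at_right 0. f j + t < g j" by (rule eventually_mono) simp
qed

lemma eventually_all_subintervals:
  assumes "finite \<beta>"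
    and "\<And>\<alpha>' \<beta>'. \<alpha> \<subseteq> \<alpha>' \<Longrightarrow> \<alpha>' \<subseteq> \<beta>' \<Longrightarrow> \<beta>' \<subseteq> \<beta> \<Longrightarrow> eventually (P \<alpha>' \<beta>') F"
  shows "eventually (\<lambda>t. \<forall>\<alpha>' \<beta>'. \<alpha> \<subseteq> \<alpha>' \<and> \<alpha>' \<subseteq> \<beta>' \<and> \<beta>' \<subseteq> \<beta> \<longrightarrow> P \<alpha>' \<beta>' t) F"
proof -
  have "eventually (\<lambda>t. \<forall>\<beta>'\<in>Pow \<beta>. \<forall>\<alpha>'\<in>Pow \<beta>'. \<alpha> \<subseteq> \<alpha>' \<longrightarrow> P \<alpha>' \<beta>' t) F"
    using assms finite_subset
    by (intro eventually_ball_finite ballI) (auto intro: eventually_mono[OF always_eventually])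
  then show ?thesis by (rule eventually_mono) blast
qed

lemma eventually_unit_vector_with_inner:
  fixes n :: "'i \<Rightarrow> 'a::euclidean_space"
  assumes fin: "finite J" and inj: "inj_on n J" and ind: "independent (n ` J)"
    and card: "card J < DIM('a)"
  shows "\<forall>\<^sub>F t in at_right 0. \<exists>u. norm u = 1 \<and> u \<notin> span (n ` J) \<and> (\<forall>j\<in>J. u \<bullet> n j = t * b j)"
proof -
  obtain a where a: "a \<in> span (n ` J)" "\<forall>j\<in>J. a \<bullet> n j = b j"
    using exists_inner_eq_on_independent[OF inj ind] by blast
  have "dim (n ` J) < DIM('a)"
    using dim_eq_card_independent[OF ind] card_image_le[OF fin, of n] card by simp
  then obtain w where w: "w \<noteq> 0" "\<And>y. y \<in> span (n ` J) \<Longrightarrow> orthogonal w y"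
    using orthogonal_to_subspace_exists by blast
  then have w1: "norm (w /\<^sub>R norm w) = 1" "\<And>y. y \<in> span (n ` J) \<Longrightarrow> (w /\<^sub>R norm w) \<bullet> y = 0"
    by (auto simp: orthogonal_def)
  have "((\<lambda>t. \<bar>t * norm a\<bar>) \<longlongrightarrow> 0) (at_right 0)"
    by (intro tendsto_rabs_zero tendsto_mult_left_zero tendsto_ident_at)
  then have "\<forall>\<^sub>F t in at_right 0. \<bar>t * norm a\<bar> < 1"
    by (rule order_tendstoD) simp
  then show ?thesis
  proof (rule eventually_mono)
    fix t assume "\<bar>t * norm a\<bar> < 1"
    then obtain u where u:
      "norm u = 1" "u \<notin> span (n ` J)" "\<And>y. y \<in> span (n ` J) \<Longrightarrow> u \<bullet> y = t * (a \<bullet> y)"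
      using unit_vector_off_subspace[OF a(1) w1] by blast
    moreover have "u \<bullet> n j = t * b j" if "j \<in> J" for j
      using u(3)[OF span_base] a(2) that by simp
    ultimately show "\<exists>u. norm u = 1 \<and> u \<notin> span (n ` J) \<and> (\<forall>j\<in>J. u \<bullet> n j = t * b j)"
      by blast
  qed
qed

section \<open>Spheres\<close>

lemma compare_of_power2_eq:
  fixes a r s :: real
  assumes "0 \<le> a" "0 \<le> r" "a\<^sup>2 = r\<^sup>2 + s"
  shows "s < 0 \<Longrightarrow> a < r" and "s = 0 \<Longrightarrow> a = r" and "0 < s \<Longrightarrow> r < a"
  using assms abs_le_square_iff[of a r] abs_le_square_iff[of r a] by auto

lemma power2_dist_moved:
  fixes c x u :: "'a::real_inner"
  assumes "dist c x = r" "norm u = 1" "u \<bullet> (x - c) = t * (s - 1 / 2)"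
  shows "(dist c (x + t *\<^sub>R u))\<^sup>2 = r\<^sup>2 + 2 * t\<^sup>2 * s"
proof -
  define n where "n = x - c"
  have "dist c (x + t *\<^sub>R u) = norm (n + t *\<^sub>R u)"
    unfolding n_def by (metis add_diff_eq diff_add_eq dist_commute dist_norm)
  then have "(dist c (x + t *\<^sub>R u))\<^sup>2 = (n + t *\<^sub>R u) \<bullet> (n + t *\<^sub>R u)"
    by (simp add: power2_norm_eq_inner)
  also have "\<dots> = n \<bullet> n + 2 * t * (u \<bullet> n) + t\<^sup>2 * (u \<bullet> u)"
    by (simp add: inner_add_left inner_add_right inner_commute[of n u] power2_eq_square algebra_simps)
  also have "n \<bullet> n = r\<^sup>2"
    using assms(1) by (simp add: n_def dist_norm norm_minus_commute dot_square_norm)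
  also have "u \<bullet> n = t * (s - 1 / 2)" using assms(3) by (simp add: n_def)
  finally show ?thesis
    using assms(2) by (simp add: dot_square_norm power2_eq_square algebra_simps)
qed

lemma is_dim_sphere_sphere:
  fixes p :: "'a::euclidean_space"
  assumes "0 < e"
  shows "is_dim_sphere (DIM('a) - 1) (sphere p e)"
  unfolding is_dim_sphere_def
  using assms DIM_positive[where 'a='a]
  by (intro exI[of _ p] exI[of _ e] exI[of _ UNIV]) (simp add: aff_dim_UNIV)

lemma sphere_Int_sphere_iff:
  fixes c0 p x :: "'a::euclidean_space"
  assumes p: "dist c0 p = r0" and pos: "0 < r0" "0 < e" "0 < \<rho>"
    and e2: "e\<^sup>2 = 2 * r0\<^sup>2 * (1 - \<theta>)" and \<rho>2: "\<rho>\<^sup>2 = r0\<^sup>2 * (1 - \<theta>\<^sup>2)"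
  defines "q \<equiv> (1 - \<theta>) *\<^sub>R c0 + \<theta> *\<^sub>R p"
  shows "dist c0 x = r0 \<and> dist p x = e \<longleftrightarrow> dist q x = \<rho> \<and> (p - c0) \<bullet> x = (p - c0) \<bullet> q"
proof -
  define v where "v = p - c0"
  define w where "w = x - c0"
  have vv: "v \<bullet> v = r0\<^sup>2"
    using p by (simp add: v_def dist_norm power2_norm_eq_inner[symmetric] norm_minus_commute)
  have "x - c0 = w" "x - p = w - v" "x - q = w - \<theta> *\<^sub>R v"
    by (simp_all add: w_def v_def q_def algebra_simps)
  then have "dist c0 x = norm w" "dist p x = norm (w - v)" "dist q x = norm (w - \<theta> *\<^sub>R v)"
    by (metis dist_commute dist_norm)+
  then have "(dist c0 x)\<^sup>2 = w \<bullet> w" "(dist p x)\<^sup>2 = (w - v) \<bullet> (w - v)"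
    "(dist q x)\<^sup>2 = (w - \<theta> *\<^sub>R v) \<bullet> (w - \<theta> *\<^sub>R v)"
    by (simp_all add: power2_norm_eq_inner)
  then have d: "(dist c0 x)\<^sup>2 = w \<bullet> w" "(dist p x)\<^sup>2 = w \<bullet> w - 2 * (w \<bullet> v) + r0\<^sup>2"
    "(dist q x)\<^sup>2 = w \<bullet> w - 2 * \<theta> * (w \<bullet> v) + \<theta>\<^sup>2 * r0\<^sup>2"
    using vv by (simp_all add: inner_diff_left inner_diff_right inner_commute[of v w] power2_eq_square
        algebra_simps)
  have "v \<bullet> x - v \<bullet> q = w \<bullet> v - \<theta> * r0\<^sup>2"
    using \<open>x - q = w - \<theta> *\<^sub>R v\<close> inner_diff_right[of v x q] vv
    by (simp add: inner_diff_right inner_commute[of v w])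
  then have hyperplane: "(p - c0) \<bullet> x = (p - c0) \<bullet> q \<longleftrightarrow> w \<bullet> v = \<theta> * r0\<^sup>2"
    unfolding v_def[symmetric] by auto
  have "dist c0 x = r0 \<longleftrightarrow> (dist c0 x)\<^sup>2 = r0\<^sup>2" "dist p x = e \<longleftrightarrow> (dist p x)\<^sup>2 = e\<^sup>2"
    "dist q x = \<rho> \<longleftrightarrow> (dist q x)\<^sup>2 = \<rho>\<^sup>2"
    using pos by simp_all
  then have eqs: "dist c0 x = r0 \<longleftrightarrow> w \<bullet> w = r0\<^sup>2"
    "dist p x = e \<longleftrightarrow> w \<bullet> w - 2 * (w \<bullet> v) + r0\<^sup>2 = 2 * r0\<^sup>2 * (1 - \<theta>)"
    "dist q x = \<rho> \<longleftrightarrow> w \<bullet> w - 2 * \<theta> * (w \<bullet> v) + \<theta>\<^sup>2 * r0\<^sup>2 = r0\<^sup>2 * (1 - \<theta>\<^sup>2)"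
    by (simp_all only: d e2 \<rho>2)
  have "w \<bullet> w = r0\<^sup>2 \<and> w \<bullet> w - 2 * (w \<bullet> v) + r0\<^sup>2 = 2 * r0\<^sup>2 * (1 - \<theta>)
      \<longleftrightarrow> w \<bullet> w = r0\<^sup>2 \<and> w \<bullet> v = \<theta> * r0\<^sup>2"
    by (auto simp: algebra_simps)
  moreover have "w \<bullet> w - 2 * \<theta> * (w \<bullet> v) + \<theta>\<^sup>2 * r0\<^sup>2 = r0\<^sup>2 * (1 - \<theta>\<^sup>2) \<longleftrightarrow> w \<bullet> w = r0\<^sup>2"
    if "w \<bullet> v = \<theta> * r0\<^sup>2"
    using that by (simp add: algebra_simps power2_eq_square)
  ultimately show ?thesis
    unfolding eqs hyperplane by blast
qed

lemma sphere_Int_sphere_eq_radical_hyperplane: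
  fixes c0 p :: "'a::euclidean_space"
  assumes p: "dist c0 p = r0" and e: "0 < e" "e < r0"
  obtains \<theta> \<rho> where "0 < \<theta>" "0 < \<rho>"
    "sphere c0 r0 \<inter> sphere p e = sphere ((1 - \<theta>) *\<^sub>R c0 + \<theta> *\<^sub>R p) \<rho>
       \<inter> {x. (p - c0) \<bullet> x = (p - c0) \<bullet> ((1 - \<theta>) *\<^sub>R c0 + \<theta> *\<^sub>R p)}"
proof -
  define \<theta> where "\<theta> = 1 - e\<^sup>2 / (2 * r0\<^sup>2)"
  define \<rho> where "\<rho> = sqrt (r0\<^sup>2 * (1 - \<theta>\<^sup>2))"
  have r0: "0 < r0" using e by simp
  have "e\<^sup>2 < r0\<^sup>2" "0 < r0\<^sup>2" using e by (simp_all add: power_strict_mono)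
  then have "e\<^sup>2 < 2 * r0\<^sup>2" by linarith
  then have \<theta>: "0 < \<theta>" "\<theta> < 1" using e r0 by (simp_all add: \<theta>_def field_simps)
  then have "0 < r0\<^sup>2 * (1 - \<theta>\<^sup>2)" using r0 by (simp add: abs_square_less_1)
  then have \<rho>: "0 < \<rho>" "\<rho>\<^sup>2 = r0\<^sup>2 * (1 - \<theta>\<^sup>2)" by (simp_all add: \<rho>_def)
  have "e\<^sup>2 = 2 * r0\<^sup>2 * (1 - \<theta>)" using r0 by (simp add: \<theta>_def)
  from sphere_Int_sphere_iff[OF p r0 e(1) \<rho>(1) this \<rho>(2)]
  have "sphere c0 r0 \<inter> sphere p e = sphere ((1 - \<theta>) *\<^sub>R c0 + \<theta> *\<^sub>R p) \<rho>
       \<inter> {x. (p - c0) \<bullet> x = (p - c0) \<bullet> ((1 - \<theta>) *\<^sub>R c0 + \<theta> *\<^sub>R p)}"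
    by (simp add: set_eq_iff)
  then show ?thesis using that \<theta> \<rho> by blast
qed

lemma eventually_is_dim_sphere_Int_sphere:
  fixes X :: "'a::euclidean_space set"
  assumes X: "is_dim_sphere (Suc m) X" and p: "p \<in> X"
  shows "\<forall>\<^sub>F e in at_right 0. is_dim_sphere m (X \<inter> sphere p e)"
proof -
  obtain c0 r0 A where A: "0 < r0" "affine A" "c0 \<in> A" "aff_dim A = int (Suc m) + 1"
    and X: "X = sphere c0 r0 \<inter> A"
    using X unfolding is_dim_sphere_def by blast
  have p: "p \<in> A" "dist c0 p = r0" using p X by auto
  have "is_dim_sphere m (X \<inter> sphere p e)" if e: "e \<in> {0<..<r0}" for e
  proof -
    obtain \<theta> \<rho> where \<theta>: "0 < \<theta>" "0 < \<rho>" and cut: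
      "sphere c0 r0 \<inter> sphere p e = sphere ((1 - \<theta>) *\<^sub>R c0 + \<theta> *\<^sub>R p) \<rho>
         \<inter> {x. (p - c0) \<bullet> x = (p - c0) \<bullet> ((1 - \<theta>) *\<^sub>R c0 + \<theta> *\<^sub>R p)}"
      using sphere_Int_sphere_eq_radical_hyperplane[OF p(2)] e by auto
    define q where "q = (1 - \<theta>) *\<^sub>R c0 + \<theta> *\<^sub>R p"
    define H where "H = {x. (p - c0) \<bullet> x = (p - c0) \<bullet> q}"
    have "q \<in> A \<inter> H" using mem_affine[OF A(2,3) p(1)] by (simp add: q_def H_def)
    moreover have "c0 \<notin> H"
    proof
      assume "c0 \<in> H"
      then have "\<theta> * ((p - c0) \<bullet> (p - c0)) = 0"
        by (simp add: H_def q_def inner_diff_right inner_add_right algebra_simps)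
      then show False using \<theta>(1) p(2) A(1) by (simp add: dist_norm)
    qed
    ultimately have "aff_dim (A \<inter> H) = int m + 1"
      using aff_dim_affine_Int_hyperplane[OF A(2), of "p - c0" "(p - c0) \<bullet> q"] A(3,4)
      unfolding H_def by auto
    moreover have "X \<inter> sphere p e = sphere q \<rho> \<inter> (A \<inter> H)"
      using cut unfolding X q_def H_def by blast
    moreover have "affine (A \<inter> H)" unfolding H_def by (intro affine_Int A(2) affine_hyperplane)
    ultimately show ?thesis unfolding is_dim_sphere_def using \<theta>(2) \<open>q \<in> A \<inter> H\<close> by blast
  qed
  then show ?thesis using eventually_at_right_real[OF A(1)] by (auto elim: eventually_mono)
qed

lemma eventually_sphere_disjoint:
  fixes X :: "'a::euclidean_space set"
  assumes "closed X" "p \<notin> X"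
  shows "\<forall>\<^sub>F e in at_right 0. X \<inter> sphere p e = {}"
proof -
  obtain d where "0 < d" "ball p d \<subseteq> - X"
    using assms open_contains_ball[of "- X"] by blast
  then show ?thesis
    using eventually_at_right_real[OF \<open>0 < d\<close>] by (elim eventually_mono) auto
qed

section \<open>Atoms and transversal points\<close>

(* The atom with respect to an arbitrary set of neurons N, which shrinks along the induction. *)
definition atom_on :: "(nat \<Rightarrow> 'a set) \<Rightarrow> nat set \<Rightarrow> nat set \<Rightarrow> 'a set" where
  "atom_on U N \<gamma> = (\<Inter>i\<in>\<gamma>. U i) - (\<Union>j\<in>N - \<gamma>. U j)"

lemma atom_on_insert_fun_upd:
  assumes i: "i \<notin> M" and \<gamma>: "\<gamma> \<subseteq> insert i M"
  shows "atom_on (U(i := V)) (insert i M) \<gamma> =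
    (if i \<in> \<gamma> then atom_on U M (\<gamma> - {i}) \<inter> V else atom_on U M \<gamma> - V)"
proof -
  have upd: "(\<Inter>j\<in>A. (U(i := V)) j) = (\<Inter>j\<in>A. U j)" "(\<Union>j\<in>A. (U(i := V)) j) = (\<Union>j\<in>A. U j)"
    if "i \<notin> A" for A
    using that by (auto intro: INF_cong SUP_cong)
  show ?thesis
  proof (cases "i \<in> \<gamma>")
    case True
    have "(\<Inter>j\<in>\<gamma>. (U(i := V)) j) = V \<inter> (\<Inter>j\<in>\<gamma> - {i}. U j)"
      using INF_insert[where f="U(i := V)" and a=i and A="\<gamma> - {i}"] upd(1)[of "\<gamma> - {i}"]
      by (simp only: insert_Diff[OF True] fun_upd_same Diff_iff singletonI simp_thms)
    moreover have "insert i M - \<gamma> = M - (\<gamma> - {i})" using i \<gamma> True by auto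
    ultimately have "atom_on (U(i := V)) (insert i M) \<gamma>
        = (V \<inter> (\<Inter>j\<in>\<gamma> - {i}. U j)) - (\<Union>j\<in>M - (\<gamma> - {i}). U j)"
      unfolding atom_on_def using upd(2)[of "M - (\<gamma> - {i})"] i by simp
    also have "\<dots> = atom_on U M (\<gamma> - {i}) \<inter> V" unfolding atom_on_def by blast
    finally show ?thesis using True by simp
  next
    case False
    then have "insert i M - \<gamma> = insert i (M - \<gamma>)" using i \<gamma> by auto
    then have "atom_on (U(i := V)) (insert i M) \<gamma> = (\<Inter>j\<in>\<gamma>. U j) - (V \<union> (\<Union>j\<in>M - \<gamma>. U j))"
      unfolding atom_on_def using upd[of \<gamma>] upd[of "M - \<gamma>"] i False by simp
    also have "\<dots> = atom_on U M \<gamma> - V" unfolding atom_on_def by blast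
    finally show ?thesis using False by simp
  qed
qed

definition transversal_point ::
    "nat set \<Rightarrow> (nat \<Rightarrow> 'a::euclidean_space) \<Rightarrow> (nat \<Rightarrow> real) \<Rightarrow> nat set \<Rightarrow> nat set \<Rightarrow> 'a \<Rightarrow> bool" where
  "transversal_point N c r \<alpha> \<beta> x \<longleftrightarrow> \<alpha> \<subseteq> \<beta> \<and> \<beta> \<subseteq> N \<and>
     (\<forall>j\<in>\<alpha>. dist (c j) x < r j) \<and> (\<forall>j\<in>\<beta> - \<alpha>. dist (c j) x = r j) \<and>
     (\<forall>j\<in>N - \<beta>. r j < dist (c j) x) \<and>
     inj_on (\<lambda>j. x - c j) (\<beta> - \<alpha>) \<and> independent ((\<lambda>j. x - c j) ` (\<beta> - \<alpha>))"

lemma transversal_point_in_atom_on: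
  assumes "transversal_point N c r \<gamma> \<gamma> x"
  shows "x \<in> atom_on (\<lambda>j. ball (c j) (r j)) N \<gamma>"
  using assms unfolding transversal_point_def atom_on_def by (auto dest: less_asym)

lemma transversal_point_on_spheres:
  assumes "transversal_point N c r \<alpha> \<beta> x" "S \<subseteq> N" "x \<in> (\<Inter>j\<in>S. sphere (c j) (r j))"
  shows "S \<subseteq> \<beta> - \<alpha>"
proof
  fix j assume "j \<in> S"
  then have "dist (c j) x = r j" "j \<in> N" using assms(2,3) by auto
  then show "j \<in> \<beta> - \<alpha>" using assms(1) unfolding transversal_point_def by (metis DiffI less_irrefl)
qed

lemma transversal_point_translated_normals:
  fixes c :: "nat \<Rightarrow> 'a::euclidean_space"
  assumes "finite N" "transversal_point N c r \<alpha> \<beta> x" "J \<subseteq> \<beta> - \<alpha>"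
    and v: "v \<notin> span ((\<lambda>j. x - c j) ` (\<beta> - \<alpha>))"
  shows "inj_on (\<lambda>j. x + v - c j) J \<and> v \<notin> (\<lambda>j. x + v - c j) ` J
    \<and> independent (insert v ((\<lambda>j. x + v - c j) ` J))"
proof -
  define n where "n = (\<lambda>j. x - c j)"
  have "finite (\<beta> - \<alpha>)" "inj_on n (\<beta> - \<alpha>)" "independent (n ` (\<beta> - \<alpha>))"
    using assms(1,2) unfolding transversal_point_def n_def by (auto intro: finite_subset)
  then have "finite J" "inj_on n J" "independent (n ` J)"
    using finite_subset[OF assms(3)] inj_on_subset[OF _ assms(3)]
      independent_mono[OF _ image_mono[OF assms(3)]] by simp_all
  moreover have "v \<notin> span (n ` J)"
    using v span_mono[OF image_mono[OF assms(3)]] unfolding n_def by blast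
  ultimately have "inj_on (\<lambda>j. n j + v) J \<and> v \<notin> (\<lambda>j. n j + v) ` J
      \<and> independent (insert v ((\<lambda>j. n j + v) ` J))"
    by (rule independent_insert_translates)
  then show ?thesis unfolding n_def by (simp add: algebra_simps)
qed

lemma transversal_point_move:
  fixes c :: "nat \<Rightarrow> 'a::euclidean_space"
  assumes fin: "finite N" and x_tp: "transversal_point N c r \<alpha> \<beta> x"
    and sub: "\<alpha> \<subseteq> \<alpha>'" "\<alpha>' \<subseteq> \<beta>'" "\<beta>' \<subseteq> \<beta>"
    and t: "0 < t" and u: "norm u = 1" "u \<notin> span ((\<lambda>j. x - c j) ` (\<beta> - \<alpha>))"
    and u_n: "\<forall>j\<in>\<beta> - \<alpha>. u \<bullet> (x - c j) = t * ((if j \<in> \<alpha>' then -1 else if j \<in> \<beta>' then 0 else 1) - 1 / 2)"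
    and in_\<alpha>: "\<forall>j\<in>\<alpha>. dist (c j) x + t < r j" and out_\<beta>: "\<forall>j\<in>N - \<beta>. r j + t < dist (c j) x"
  shows "transversal_point N c r \<alpha>' \<beta>' (x + t *\<^sub>R u)"
proof -
  define J where "J = \<beta> - \<alpha>"
  define n where "n = (\<lambda>j. x - c j)"
  define y where "y = x + t *\<^sub>R u"
  have x: "\<beta> \<subseteq> N" "\<forall>j\<in>J. dist (c j) x = r j"
    using x_tp by (simp_all add: transversal_point_def J_def)
  have dist_y: "\<bar>dist (c j) y - dist (c j) x\<bar> \<le> t" for j
    using dist_triangle[of "c j" y x] dist_triangle[of "c j" x y] t u(1)
    by (simp add: y_def dist_norm abs_le_iff)
  have sq: "(dist (c j) y)\<^sup>2 = (r j)\<^sup>2 + 2 * t\<^sup>2 * (if j \<in> \<alpha>' then -1 else if j \<in> \<beta>' then 0 else 1)"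
    if "j \<in> J" for j
    unfolding y_def using power2_dist_moved x(2) u(1) u_n that J_def by blast
  have cmp: "0 \<le> dist (c j) y" "0 \<le> r j" if "j \<in> J" for j
    using x(2) that zero_le_dist[of "c j" x] by simp_all
  have "t *\<^sub>R u \<notin> span (n ` J)"
  proof
    assume "t *\<^sub>R u \<in> span (n ` J)"
    from span_scale[OF this, of "1 / t"] show False using t u(2) by (simp add: J_def n_def)
  qed
  moreover have "\<beta>' - \<alpha>' \<subseteq> \<beta> - \<alpha>" using sub by blast
  ultimately have "inj_on (\<lambda>j. y - c j) (\<beta>' - \<alpha>')"
    "independent (insert (t *\<^sub>R u) ((\<lambda>j. y - c j) ` (\<beta>' - \<alpha>')))"
    using transversal_point_translated_normals[OF fin x_tp] unfolding y_def J_def n_def by blast+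
  then have indep: "inj_on (\<lambda>j. y - c j) (\<beta>' - \<alpha>') \<and> independent ((\<lambda>j. y - c j) ` (\<beta>' - \<alpha>'))"
    using independent_mono[OF _ subset_insertI] by blast
  have "transversal_point N c r \<alpha>' \<beta>' y"
    unfolding transversal_point_def
  proof (intro conjI ballI)
    show "\<alpha>' \<subseteq> \<beta>'" "\<beta>' \<subseteq> N" using sub x(1) by auto
    show "dist (c j) y < r j" if "j \<in> \<alpha>'" for j
    proof (cases "j \<in> \<alpha>")
      case True then show ?thesis using in_\<alpha> dist_y[of j] by force
    next
      case False
      then have "j \<in> J" using that sub by (auto simp: J_def)
      then show ?thesis using compare_of_power2_eq(1)[OF cmp sq] t that by simp
    qed
    show "dist (c j) y = r j" if "j \<in> \<beta>' - \<alpha>'" for j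
    proof -
      have "j \<in> J" using that sub by (auto simp: J_def)
      then show ?thesis using compare_of_power2_eq(2)[OF cmp sq] that by simp
    qed
    show "r j < dist (c j) y" if "j \<in> N - \<beta>'" for j
    proof (cases "j \<in> \<beta>")
      case False then show ?thesis using out_\<beta> that dist_y[of j] by force
    next
      case True
      then have "j \<in> J" "j \<notin> \<alpha>'" using that sub by (auto simp: J_def)
      then show ?thesis using compare_of_power2_eq(3)[OF cmp sq] t that by simp
    qed
  qed (use indep in simp_all)
  then show ?thesis unfolding y_def .
qed

lemma eventually_transversal_point_nearby:
  fixes c :: "nat \<Rightarrow> 'a::euclidean_space"
  assumes fin: "finite N" and x: "transversal_point N c r \<alpha> \<beta> x"
    and card: "card (\<beta> - \<alpha>) < DIM('a)"
    and sub: "\<alpha> \<subseteq> \<alpha>'" "\<alpha>' \<subseteq> \<beta>'" "\<beta>' \<subseteq> \<beta>"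
  shows "\<forall>\<^sub>F t in at_right 0. \<exists>u. norm u = 1 \<and> u \<notin> span ((\<lambda>j. x - c j) ` (\<beta> - \<alpha>))
           \<and> transversal_point N c r \<alpha>' \<beta>' (x + t *\<^sub>R u)"
proof -
  have x': "\<alpha> \<subseteq> \<beta>" "\<beta> \<subseteq> N" "\<forall>j\<in>\<alpha>. dist (c j) x < r j" "\<forall>j\<in>N - \<beta>. r j < dist (c j) x"
    "inj_on (\<lambda>j. x - c j) (\<beta> - \<alpha>)" "independent ((\<lambda>j. x - c j) ` (\<beta> - \<alpha>))"
    using x by (simp_all add: transversal_point_def)
  have "finite (\<beta> - \<alpha>)" using x'(2) fin by (meson finite_subset finite_Diff)
  have "\<forall>\<^sub>F t in at_right 0. 0 < t \<and> (\<forall>j\<in>\<alpha>. dist (c j) x + t < r j) \<and> (\<forall>j\<in>N - \<beta>. r j + t < dist (c j) x)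
      \<and> (\<exists>u. norm u = 1 \<and> u \<notin> span ((\<lambda>j. x - c j) ` (\<beta> - \<alpha>)) \<and> (\<forall>j\<in>\<beta> - \<alpha>.
           u \<bullet> (x - c j) = t * ((if j \<in> \<alpha>' then -1 else if j \<in> \<beta>' then 0 else 1) - 1 / 2)))"
    using eventually_at_right_less eventually_add_less_finite[OF finite_subset[OF _ fin] x'(3)]
      eventually_add_less_finite[OF finite_Diff[OF fin] x'(4)]
      eventually_unit_vector_with_inner[OF \<open>finite (\<beta> - \<alpha>)\<close> x'(5,6) card]
    using x'(1,2) by (intro eventually_conj) auto
  then show ?thesis
    by (rule eventually_mono) (use transversal_point_move[OF fin x sub] in blast)
qed

lemma islimpt_atom_on_imp_subinterval:
  assumes fin: "finite N" and x: "transversal_point N c r \<alpha> \<beta> x" and "\<gamma> \<subseteq> N"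
    and lim: "x islimpt atom_on (\<lambda>j. ball (c j) (r j)) N \<gamma>"
  shows "\<alpha> \<subseteq> \<gamma> \<and> \<gamma> \<subseteq> \<beta>"
proof -
  define T where "T = (\<Inter>j\<in>\<alpha>. ball (c j) (r j)) \<inter> (\<Inter>j\<in>N - \<beta>. - cball (c j) (r j))"
  have "finite \<alpha>" using x fin unfolding transversal_point_def by (meson finite_subset)
  then have "open T" unfolding T_def using fin by (intro open_Int open_INT) auto
  moreover have "x \<in> T" using x unfolding T_def transversal_point_def by (auto simp: not_le)
  ultimately obtain y where "y \<in> atom_on (\<lambda>j. ball (c j) (r j)) N \<gamma>" "y \<in> T"
    using lim unfolding islimpt_def by blast
  then have y: "\<forall>j\<in>\<alpha>. dist (c j) y < r j" "\<forall>j\<in>N - \<beta>. r j < dist (c j) y"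
    "\<forall>j\<in>\<gamma>. dist (c j) y < r j" "\<forall>j\<in>N - \<gamma>. r j \<le> dist (c j) y"
    unfolding T_def atom_on_def by (simp_all add: not_less not_le)
  have "\<alpha> \<subseteq> \<beta>" "\<beta> \<subseteq> N" using x unfolding transversal_point_def by auto
  show ?thesis
  proof
    show "\<alpha> \<subseteq> \<gamma>"
    proof
      fix j assume "j \<in> \<alpha>"
      then show "j \<in> \<gamma>"
        using y(1,4) \<open>\<alpha> \<subseteq> \<beta>\<close> \<open>\<beta> \<subseteq> N\<close> by (metis DiffI not_le subsetD)
    qed
    show "\<gamma> \<subseteq> \<beta>"
    proof
      fix j assume "j \<in> \<gamma>"
      then show "j \<in> \<beta>"
        using y(2,3) \<open>\<gamma> \<subseteq> N\<close> by (metis DiffI less_asym subsetD)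
    qed
  qed
qed

lemma transversal_point_islimpt_atom_on:
  fixes c :: "nat \<Rightarrow> 'a::euclidean_space"
  assumes fin: "finite N" and x: "transversal_point N c r \<alpha> \<beta> x"
    and card: "card (\<beta> - \<alpha>) < DIM('a)" and "\<alpha> \<subseteq> \<gamma>" "\<gamma> \<subseteq> \<beta>"
  shows "x islimpt atom_on (\<lambda>j. ball (c j) (r j)) N \<gamma>"
  unfolding islimpt_approachable
proof (intro allI impI)
  fix d :: real assume "0 < d"
  have "\<forall>\<^sub>F t in at_right 0. \<exists>u. norm u = 1 \<and> transversal_point N c r \<gamma> \<gamma> (x + t *\<^sub>R u)"
    using eventually_transversal_point_nearby[OF fin x card \<open>\<alpha> \<subseteq> \<gamma>\<close> subset_refl \<open>\<gamma> \<subseteq> \<beta>\<close>]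
    by (auto elim!: eventually_mono)
  then have "\<forall>\<^sub>F t in at_right 0. (\<exists>u. norm u = 1 \<and> transversal_point N c r \<gamma> \<gamma> (x + t *\<^sub>R u)) \<and> t < d"
    using eventually_at_right_real[OF \<open>0 < d\<close>] by (elim eventually_rev_mp) (simp add: eventually_mono)
  then obtain t u where tu: "0 < t" "t < d" "norm u = 1"
    and y: "transversal_point N c r \<gamma> \<gamma> (x + t *\<^sub>R u)"
    using eventually_at_right_0_ex by blast
  have "x + t *\<^sub>R u \<in> atom_on (\<lambda>j. ball (c j) (r j)) N \<gamma>"
    using y by (rule transversal_point_in_atom_on)
  moreover have "x + t *\<^sub>R u \<noteq> x" "dist (x + t *\<^sub>R u) x < d" using tu by (auto simp: dist_norm)
  ultimately show "\<exists>y\<in>atom_on (\<lambda>j. ball (c j) (r j)) N \<gamma>. y \<noteq> x \<and> dist y x < d" by blast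
qed

lemma transversal_point_islimpt_atom_on_iff:
  fixes c :: "nat \<Rightarrow> 'a::euclidean_space"
  assumes "finite N" "transversal_point N c r \<alpha> \<beta> x" "card (\<beta> - \<alpha>) < DIM('a)" "\<gamma> \<subseteq> N"
  shows "x islimpt atom_on (\<lambda>j. ball (c j) (r j)) N \<gamma> \<longleftrightarrow> \<alpha> \<subseteq> \<gamma> \<and> \<gamma> \<subseteq> \<beta>"
  using islimpt_atom_on_imp_subinterval[OF assms(1,2,4)]
    transversal_point_islimpt_atom_on[OF assms(1-3)] by blast

lemma eventually_transversal_point_avoiding:
  fixes c :: "nat \<Rightarrow> 'a::euclidean_space"
  assumes "finite N" "transversal_point N c r \<alpha> \<beta> x" "card (\<beta> - \<alpha>) < DIM('a)"
  shows "\<forall>\<^sub>F e in at_right 0. \<exists>y. transversal_point N c r \<alpha> \<beta> y \<and> e < dist q y"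
proof -
  have "\<alpha> \<subseteq> \<beta>" using assms(2) unfolding transversal_point_def by blast
  obtain y where y: "transversal_point N c r \<alpha> \<beta> y" "y \<noteq> q"
  proof (cases "x = q")
    case True
    obtain t u where "0 < t" "norm u = 1" "transversal_point N c r \<alpha> \<beta> (x + t *\<^sub>R u)"
      using eventually_at_right_0_ex[OF eventually_transversal_point_nearby[OF assms
            subset_refl \<open>\<alpha> \<subseteq> \<beta>\<close> subset_refl]]
      by blast
    then show ?thesis using that True by force
  qed (use assms that in blast)
  then show ?thesis using eventually_at_right_real[of 0 "dist q y"] by (auto elim: eventually_mono)
qed

lemma transversal_point_fun_upd_outside:
  assumes "transversal_point N c r \<alpha> \<beta> x" "i \<notin> N" "e < dist p x"
  shows "transversal_point (insert i N) (c(i := p)) (r(i := e)) \<alpha> \<beta> x"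
proof -
  have "i \<notin> \<beta>" using assms unfolding transversal_point_def by auto
  then have "inj_on (\<lambda>j. x - (c(i := p)) j) (\<beta> - \<alpha>) = inj_on (\<lambda>j. x - c j) (\<beta> - \<alpha>)"
    "(\<lambda>j. x - (c(i := p)) j) ` (\<beta> - \<alpha>) = (\<lambda>j. x - c j) ` (\<beta> - \<alpha>)"
    by (auto intro!: inj_on_cong)
  then show ?thesis using assms \<open>i \<notin> \<beta>\<close> unfolding transversal_point_def by auto
qed

lemma transversal_point_fun_upd_inside:
  assumes "transversal_point N c r \<alpha> \<beta> x" "i \<notin> N" "dist p x < e"
  shows "transversal_point (insert i N) (c(i := p)) (r(i := e)) (insert i \<alpha>) (insert i \<beta>) x"
proof -
  have "i \<notin> \<beta>" using assms unfolding transversal_point_def by auto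
  then have "insert i \<beta> - insert i \<alpha> = \<beta> - \<alpha>" "insert i N - insert i \<beta> = N - \<beta>"
    "inj_on (\<lambda>j. x - (c(i := p)) j) (\<beta> - \<alpha>) = inj_on (\<lambda>j. x - c j) (\<beta> - \<alpha>)"
    "(\<lambda>j. x - (c(i := p)) j) ` (\<beta> - \<alpha>) = (\<lambda>j. x - c j) ` (\<beta> - \<alpha>)"
    using assms(2) by (auto intro!: inj_on_cong)
  then show ?thesis using assms \<open>i \<notin> \<beta>\<close> unfolding transversal_point_def by auto
qed

lemma transversal_point_fun_upd_on_sphere:
  assumes "transversal_point N c r \<alpha> \<beta> x" "i \<notin> N" "dist p x = e"
    and "x - p \<notin> (\<lambda>j. x - c j) ` (\<beta> - \<alpha>)"
    and "independent (insert (x - p) ((\<lambda>j. x - c j) ` (\<beta> - \<alpha>)))"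
  shows "transversal_point (insert i N) (c(i := p)) (r(i := e)) \<alpha> (insert i \<beta>) x"
proof -
  have "i \<notin> \<beta>" "\<alpha> \<subseteq> \<beta>" using assms unfolding transversal_point_def by auto
  then have "insert i \<beta> - \<alpha> = insert i (\<beta> - \<alpha>)" "insert i N - insert i \<beta> = N - \<beta>"
    "inj_on (\<lambda>j. x - (c(i := p)) j) (\<beta> - \<alpha>) = inj_on (\<lambda>j. x - c j) (\<beta> - \<alpha>)"
    "(\<lambda>j. x - (c(i := p)) j) ` (\<beta> - \<alpha>) = (\<lambda>j. x - c j) ` (\<beta> - \<alpha>)"
    using assms(2) by (auto intro!: inj_on_cong)
  then show ?thesis
    using assms \<open>i \<notin> \<beta>\<close> unfolding transversal_point_def by (auto simp: dist_commute inj_on_insert)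
qed

lemma exists_transversal_point_fun_upd_inside:
  fixes c :: "nat \<Rightarrow> 'a::euclidean_space"
  assumes "finite M" "transversal_point M c r \<sigma> \<tau> p" "card (\<tau> - \<sigma>) < DIM('a)" "i \<notin> M" "0 < e"
    and "\<sigma> \<subseteq> \<alpha>" "\<alpha> \<subseteq> \<beta>" "\<beta> \<subseteq> \<tau>"
  shows "\<exists>y. transversal_point (insert i M) (c(i := p)) (r(i := e)) (insert i \<alpha>) (insert i \<beta>) y"
proof -
  have "\<forall>\<^sub>F t in at_right 0. t < e \<and> (\<exists>u. norm u = 1 \<and> transversal_point M c r \<alpha> \<beta> (p + t *\<^sub>R u))"
    using eventually_at_right_real[OF \<open>0 < e\<close>] eventually_transversal_point_nearby[OF assms(1-3,6-8)]
    by (simp add: eventually_conj_iff) (auto elim: eventually_mono)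
  then obtain t u where "0 < t" "t < e" "norm u = 1" "transversal_point M c r \<alpha> \<beta> (p + t *\<^sub>R u)"
    using eventually_at_right_0_ex by blast
  moreover from this have "dist p (p + t *\<^sub>R u) < e" by (simp add: dist_norm)
  ultimately show ?thesis using transversal_point_fun_upd_inside \<open>i \<notin> M\<close> by blast
qed

lemma transversal_point_fun_upd_on_new_sphere:
  fixes c :: "nat \<Rightarrow> 'a::euclidean_space"
  assumes fin: "finite M" and p: "transversal_point M c r \<sigma> \<tau> p" and "i \<notin> M" "0 < e"
    and sub: "\<sigma> \<subseteq> \<alpha>" "\<beta> \<subseteq> \<tau>" and u: "norm u = 1" "u \<notin> span ((\<lambda>j. p - c j) ` (\<tau> - \<sigma>))"
    and y: "transversal_point M c r \<alpha> \<beta> (p + e *\<^sub>R u)"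
  shows "transversal_point (insert i M) (c(i := p)) (r(i := e)) \<alpha> (insert i \<beta>) (p + e *\<^sub>R u)"
proof -
  have "e *\<^sub>R u \<notin> span ((\<lambda>j. p - c j) ` (\<tau> - \<sigma>))"
  proof
    assume "e *\<^sub>R u \<in> span ((\<lambda>j. p - c j) ` (\<tau> - \<sigma>))"
    from span_scale[OF this, of "1 / e"] show False using u(2) \<open>0 < e\<close> by simp
  qed
  from transversal_point_translated_normals[OF fin p _ this, of "\<beta> - \<alpha>"] sub
  have "p + e *\<^sub>R u - p \<notin> (\<lambda>j. p + e *\<^sub>R u - c j) ` (\<beta> - \<alpha>)"
    "independent (insert (p + e *\<^sub>R u - p) ((\<lambda>j. p + e *\<^sub>R u - c j) ` (\<beta> - \<alpha>)))"
    by auto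
  moreover have "dist p (p + e *\<^sub>R u) = e" using u(1) \<open>0 < e\<close> by (simp add: dist_norm)
  ultimately show ?thesis
    using transversal_point_fun_upd_on_sphere[OF y \<open>i \<notin> M\<close>] by blast
qed

section \<open>Adding a small ball\<close>

definition well_formed_on :: "nat set \<Rightarrow> (nat \<Rightarrow> 'a::euclidean_space) \<Rightarrow> (nat \<Rightarrow> real) \<Rightarrow> bool" where
  "well_formed_on N c r \<longleftrightarrow>
     (\<forall>S \<subseteq> N.
        (1 \<le> card S \<and> card S \<le> DIM('a) \<longrightarrow>
           (\<Inter>i\<in>S. sphere (c i) (r i)) = {} \<or>
           is_dim_sphere (DIM('a) - card S) (\<Inter>i\<in>S. sphere (c i) (r i))) \<and>
        (card S = DIM('a) + 1 \<longrightarrow> (\<Inter>i\<in>S. sphere (c i) (r i)) = {}))"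

lemma eventually_spheres_through_transversal_point:
  fixes c :: "nat \<Rightarrow> 'a::euclidean_space"
  assumes fin: "finite M" and wf: "well_formed_on M c r" and p: "transversal_point M c r \<sigma> \<tau> p"
    and card: "card (\<tau> - \<sigma>) < DIM('a)"
    and S: "S \<subseteq> M" "S \<noteq> {}" "p \<in> (\<Inter>j\<in>S. sphere (c j) (r j))"
  shows "card S < DIM('a) \<and> (\<forall>\<^sub>F e in at_right 0.
    is_dim_sphere (DIM('a) - card S - 1) ((\<Inter>j\<in>S. sphere (c j) (r j)) \<inter> sphere p e))"
proof -
  have "S \<subseteq> \<tau> - \<sigma>" using transversal_point_on_spheres[OF p S(1,3)] .
  moreover have "finite (\<tau> - \<sigma>)"
    using p fin unfolding transversal_point_def by (meson finite_Diff finite_subset)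
  ultimately have "finite S" "card S \<le> card (\<tau> - \<sigma>)"
    by (auto intro: finite_subset card_mono)
  then have "card S < DIM('a)" "1 \<le> card S"
    using card S(2) by (simp_all add: Suc_le_eq card_gt_0_iff)
  moreover have "1 \<le> card S \<and> card S \<le> DIM('a) \<longrightarrow> (\<Inter>j\<in>S. sphere (c j) (r j)) = {} \<or>
      is_dim_sphere (DIM('a) - card S) (\<Inter>j\<in>S. sphere (c j) (r j))"
    using wf S(1) unfolding well_formed_on_def by blast
  ultimately have "is_dim_sphere (DIM('a) - card S) (\<Inter>j\<in>S. sphere (c j) (r j))"
    using S(3) less_imp_le by blast
  moreover have "DIM('a) - card S = Suc (DIM('a) - card S - 1)" using \<open>card S < DIM('a)\<close> by simp
  ultimately show ?thesis
    using S(3) eventually_is_dim_sphere_Int_sphere \<open>card S < DIM('a)\<close> by metis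
qed

lemma eventually_spheres_Int_sphere:
  fixes c :: "nat \<Rightarrow> 'a::euclidean_space"
  assumes fin: "finite M" and wf: "well_formed_on M c r" and p: "transversal_point M c r \<sigma> \<tau> p"
    and card: "card (\<tau> - \<sigma>) < DIM('a)"
  shows "\<forall>\<^sub>F e in at_right 0. \<forall>S\<in>Pow M. S \<noteq> {} \<longrightarrow>
    (\<Inter>j\<in>S. sphere (c j) (r j)) \<inter> sphere p e = {} \<or>
    card S < DIM('a) \<and> is_dim_sphere (DIM('a) - card S - 1) ((\<Inter>j\<in>S. sphere (c j) (r j)) \<inter> sphere p e)"
proof (intro eventually_ball_finite ballI)
  fix S assume S: "S \<in> Pow M"
  define X where "X = (\<Inter>j\<in>S. sphere (c j) (r j))"
  show "\<forall>\<^sub>F e in at_right 0. S \<noteq> {} \<longrightarrow> X \<inter> sphere p e = {} \<or>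
    card S < DIM('a) \<and> is_dim_sphere (DIM('a) - card S - 1) (X \<inter> sphere p e)"
  proof (cases "S \<noteq> {} \<and> p \<in> X")
    case True
    then have "card S < DIM('a)"
      and "\<forall>\<^sub>F e in at_right 0. is_dim_sphere (DIM('a) - card S - 1) (X \<inter> sphere p e)"
      using eventually_spheres_through_transversal_point[OF fin wf p card, of S] S
      unfolding X_def by auto
    then show ?thesis by (elim eventually_mono) simp
  next
    case False
    show ?thesis
    proof (cases "S = {}")
      case False
      with \<open>\<not> (S \<noteq> {} \<and> p \<in> X)\<close> have "p \<notin> X" by blast
      moreover have "closed X" unfolding X_def by (intro closed_INT) auto
      ultimately have "\<forall>\<^sub>F e in at_right 0. X \<inter> sphere p e = {}"
        using eventually_sphere_disjoint by blast
      then show ?thesis by (elim eventually_mono) simp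
    qed simp
  qed
qed (use fin in simp)

lemma well_formed_on_fun_upd:
  fixes c :: "nat \<Rightarrow> 'a::euclidean_space"
  assumes fin: "finite M" and wf: "well_formed_on M c r" and i: "i \<notin> M" and e: "0 < e"
    and cut: "\<forall>S\<in>Pow M. S \<noteq> {} \<longrightarrow>
      (\<Inter>j\<in>S. sphere (c j) (r j)) \<inter> sphere p e = {} \<or>
      card S < DIM('a) \<and> is_dim_sphere (DIM('a) - card S - 1) ((\<Inter>j\<in>S. sphere (c j) (r j)) \<inter> sphere p e)"
  shows "well_formed_on (insert i M) (c(i := p)) (r(i := e))"
  unfolding well_formed_on_def
proof (intro allI impI)
  fix S assume S: "S \<subseteq> insert i M"
  show "(1 \<le> card S \<and> card S \<le> DIM('a) \<longrightarrow>
      (\<Inter>j\<in>S. sphere ((c(i := p)) j) ((r(i := e)) j)) = {} \<or>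
      is_dim_sphere (DIM('a) - card S) (\<Inter>j\<in>S. sphere ((c(i := p)) j) ((r(i := e)) j))) \<and>
    (card S = DIM('a) + 1 \<longrightarrow> (\<Inter>j\<in>S. sphere ((c(i := p)) j) ((r(i := e)) j)) = {})"
  proof (cases "i \<in> S")
    case False
    have "(\<Inter>j\<in>S. sphere ((c(i := p)) j) ((r(i := e)) j)) = (\<Inter>j\<in>S. sphere (c j) (r j))"
      using False by (intro INF_cong refl) auto
    moreover have "S \<subseteq> M" using S False by auto
    ultimately show ?thesis using wf unfolding well_formed_on_def by simp
  next
    case True
    define S0 where "S0 = S - {i}"
    have "finite S" using S fin finite_subset by blast
    then have S0: "S0 \<subseteq> M" "finite S0" "card S = Suc (card S0)"
      using S card_Suc_Diff1[OF \<open>finite S\<close> True] unfolding S0_def by auto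
    have "(\<Inter>j\<in>S0. sphere ((c(i := p)) j) ((r(i := e)) j)) = (\<Inter>j\<in>S0. sphere (c j) (r j))"
      unfolding S0_def by (intro INF_cong refl) auto
    moreover have "S = insert i S0" using True unfolding S0_def by blast
    ultimately have X: "(\<Inter>j\<in>S. sphere ((c(i := p)) j) ((r(i := e)) j))
        = (\<Inter>j\<in>S0. sphere (c j) (r j)) \<inter> sphere p e"
      by (simp add: Int_commute)
    show ?thesis
    proof (cases "S0 = {}")
      case True
      then show ?thesis
        using S0(3) X is_dim_sphere_sphere[OF e, of p] DIM_positive[where 'a='a] by simp
    next
      case False
      then have "(\<Inter>j\<in>S0. sphere (c j) (r j)) \<inter> sphere p e = {} \<or> card S0 < DIM('a) \<and>
          is_dim_sphere (DIM('a) - card S0 - 1) ((\<Inter>j\<in>S0. sphere (c j) (r j)) \<inter> sphere p e)"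
        using cut[rule_format, OF PowI[OF S0(1)]] by blast
      then show ?thesis unfolding X S0(3) by (elim disjE conjE) simp_all
    qed
  qed
qed

lemma atom_on_within_small_ball:
  assumes in_\<sigma>: "\<forall>j\<in>\<sigma>. dist (c j) p + e < r j" and \<sigma>: "\<sigma> \<subseteq> M"
    and out_\<tau>: "\<forall>j\<in>M - \<tau>. r j + e < dist (c j) p"
    and \<gamma>: "\<gamma> \<subseteq> M" and x: "x \<in> atom_on (\<lambda>j. ball (c j) (r j)) M \<gamma>" "dist p x < e"
  shows "\<sigma> \<subseteq> \<gamma> \<and> \<gamma> \<subseteq> \<tau>"
proof
  have x_in: "\<forall>j\<in>\<gamma>. dist (c j) x < r j" and x_out: "\<forall>j\<in>M - \<gamma>. r j \<le> dist (c j) x"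
    using x(1) unfolding atom_on_def by (auto simp: not_less)
  show "\<sigma> \<subseteq> \<gamma>"
  proof
    fix j assume "j \<in> \<sigma>"
    then have "dist (c j) x < r j" "j \<in> M"
      using in_\<sigma> \<sigma> x(2) dist_triangle[of "c j" x p] by (auto simp: dist_commute)
    then show "j \<in> \<gamma>" using x_out by (metis DiffI leD)
  qed
  show "\<gamma> \<subseteq> \<tau>"
  proof
    fix j assume j: "j \<in> \<gamma>"
    show "j \<in> \<tau>"
    proof (rule ccontr)
      assume "j \<notin> \<tau>"
      then have "r j + e < dist (c j) p" using out_\<tau> j \<gamma> by blast
      moreover have "dist (c j) p \<le> dist (c j) x + dist p x"
        using dist_triangle[of "c j" p x] by (simp add: dist_commute)
      moreover have "dist (c j) x < r j" using x_in j by blast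
      ultimately show False using x(2) by linarith
    qed
  qed
qed

lemma atom_on_fun_upd_nonempty_imp:
  assumes D: "\<forall>\<gamma>\<subseteq>M. \<gamma> \<in> D \<longleftrightarrow> atom_on (\<lambda>j. ball (c j) (r j)) M \<gamma> \<noteq> {}"
    and i: "i \<notin> M" and in_\<sigma>: "\<forall>j\<in>\<sigma>. dist (c j) p + e < r j" and \<sigma>: "\<sigma> \<subseteq> M"
    and out_\<tau>: "\<forall>j\<in>M - \<tau>. r j + e < dist (c j) p"
    and \<gamma>: "\<gamma> \<subseteq> insert i M"
    and x: "x \<in> atom_on (\<lambda>j. ball ((c(i := p)) j) ((r(i := e)) j)) (insert i M) \<gamma>"
  shows "\<gamma> \<in> D \<union> code_interval (insert i \<sigma>) (insert i \<tau>)"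
proof -
  have balls: "(\<lambda>j. ball ((c(i := p)) j) ((r(i := e)) j)) = (\<lambda>j. ball (c j) (r j))(i := ball p e)"
  proof
    fix j show "ball ((c(i := p)) j) ((r(i := e)) j) = ((\<lambda>j. ball (c j) (r j))(i := ball p e)) j"
      by (cases "j = i") simp_all
  qed
  have x: "x \<in> (if i \<in> \<gamma> then atom_on (\<lambda>j. ball (c j) (r j)) M (\<gamma> - {i}) \<inter> ball p e
      else atom_on (\<lambda>j. ball (c j) (r j)) M \<gamma> - ball p e)"
    using x unfolding balls atom_on_insert_fun_upd[OF i \<gamma>] .
  show ?thesis
  proof (cases "i \<in> \<gamma>")
    case False
    then have "x \<in> atom_on (\<lambda>j. ball (c j) (r j)) M \<gamma>" "\<gamma> \<subseteq> M" using x \<gamma> by auto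
    then have "\<gamma> \<in> D" using D by blast
    then show ?thesis by blast
  next
    case True
    then have "x \<in> atom_on (\<lambda>j. ball (c j) (r j)) M (\<gamma> - {i})" "dist p x < e" "\<gamma> - {i} \<subseteq> M"
      using x \<gamma> by auto
    then have "\<sigma> \<subseteq> \<gamma> - {i} \<and> \<gamma> - {i} \<subseteq> \<tau>"
      using atom_on_within_small_ball[OF in_\<sigma> \<sigma> out_\<tau>] by blast
    then show ?thesis using True unfolding code_interval_def by blast
  qed
qed

lemma code_interval_subset_piercing_cases:
  assumes C: "code_interval \<alpha> \<beta> \<subseteq> D \<union> code_interval (insert i \<sigma>) (insert i \<tau>)" and "\<alpha> \<subseteq> \<beta>"
    and D: "\<forall>\<gamma>\<in>D. i \<notin> \<gamma>" and "\<sigma> \<subseteq> \<tau>" "i \<notin> \<tau>"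
  obtains (old) "i \<notin> \<beta>" "code_interval \<alpha> \<beta> \<subseteq> D"
    | (inside) "i \<in> \<alpha>" "\<sigma> \<subseteq> \<alpha> - {i}" "\<beta> - {i} \<subseteq> \<tau>"
    | (boundary) "i \<in> \<beta>" "i \<notin> \<alpha>" "\<sigma> \<subseteq> \<alpha>" "\<beta> - {i} \<subseteq> \<tau>"
proof -
  have mem: "\<gamma> \<in> D \<or> insert i \<sigma> \<subseteq> \<gamma> \<and> \<gamma> \<subseteq> insert i \<tau>" if "\<alpha> \<subseteq> \<gamma>" "\<gamma> \<subseteq> \<beta>" for \<gamma>
    using C that unfolding code_interval_def by blast
  have "i \<notin> \<sigma>" using \<open>\<sigma> \<subseteq> \<tau>\<close> \<open>i \<notin> \<tau>\<close> by blast
  consider "i \<notin> \<beta>" | "i \<in> \<alpha>" | "i \<in> \<beta>" "i \<notin> \<alpha>" by blast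
  then show ?thesis
  proof cases
    case 1
    then have "code_interval \<alpha> \<beta> \<subseteq> D" using mem unfolding code_interval_def by auto
    then show ?thesis using 1 old by blast
  next
    case 2
    then have "\<alpha> \<notin> D" "\<beta> \<notin> D" using D \<open>\<alpha> \<subseteq> \<beta>\<close> by auto
    then have "insert i \<sigma> \<subseteq> \<alpha>" "\<beta> \<subseteq> insert i \<tau>"
      using mem[of \<alpha>] mem[of \<beta>] \<open>\<alpha> \<subseteq> \<beta>\<close> by auto
    then show ?thesis using 2 inside \<open>i \<notin> \<sigma>\<close> by blast
  next
    case 3
    then have "insert i \<alpha> \<notin> D" "\<beta> \<notin> D" using D by auto
    then have "insert i \<sigma> \<subseteq> insert i \<alpha>" "\<beta> \<subseteq> insert i \<tau>"
      using mem[of "insert i \<alpha>"] mem[of \<beta>] \<open>\<alpha> \<subseteq> \<beta>\<close> 3 by auto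
    then show ?thesis using 3 boundary \<open>i \<notin> \<sigma>\<close> by blast
  qed
qed

section \<open>The induction\<close>

(* The induction invariant: the conclusion of the theorem for the neurons N, with pierceability
   strengthened to the existence of transversal points. *)
definition pierced_realization ::
    "nat \<Rightarrow> nat set set \<Rightarrow> nat set \<Rightarrow> (nat \<Rightarrow> 'a::euclidean_space) \<Rightarrow> (nat \<Rightarrow> real) \<Rightarrow> bool" where
  "pierced_realization k C N c r \<longleftrightarrow> (\<forall>j\<in>N. 0 < r j) \<and>
     (\<forall>\<gamma>\<subseteq>N. \<gamma> \<in> C \<longleftrightarrow> atom_on (\<lambda>j. ball (c j) (r j)) N \<gamma> \<noteq> {}) \<and>
     well_formed_on N c r \<and>
     (\<forall>\<alpha> \<beta>. \<alpha> \<subseteq> \<beta> \<and> card (\<beta> - \<alpha>) \<le> k \<and> code_interval \<alpha> \<beta> \<subseteq> C \<longrightarrow>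
        (\<exists>x. transversal_point N c r \<alpha> \<beta> x))"

lemma pierced_realizationD:
  assumes "pierced_realization k C N c r"
  shows "\<forall>j\<in>N. 0 < r j"
    and "\<gamma> \<subseteq> N \<Longrightarrow> \<gamma> \<in> C \<longleftrightarrow> atom_on (\<lambda>j. ball (c j) (r j)) N \<gamma> \<noteq> {}"
    and "well_formed_on N c r"
    and "\<alpha> \<subseteq> \<beta> \<Longrightarrow> card (\<beta> - \<alpha>) \<le> k \<Longrightarrow> code_interval \<alpha> \<beta> \<subseteq> C \<Longrightarrow>
      \<exists>x. transversal_point N c r \<alpha> \<beta> x"
  using assms unfolding pierced_realization_def by blast+

lemma eventually_transversal_points_avoiding:
  fixes c :: "nat \<Rightarrow> 'a::euclidean_space"
  assumes dim: "DIM('a) = k + 1" and fin: "finite M" and real: "pierced_realization k D M c r"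
  shows "\<forall>\<^sub>F e in at_right 0. \<forall>\<alpha> \<beta>. \<alpha> \<subseteq> \<beta> \<and> \<beta> \<subseteq> M \<and> card (\<beta> - \<alpha>) \<le> k \<and> code_interval \<alpha> \<beta> \<subseteq> D \<longrightarrow>
    (\<exists>y. transversal_point M c r \<alpha> \<beta> y \<and> e < dist p y)"
proof -
  have "\<forall>\<^sub>F e in at_right 0. \<forall>\<alpha> \<beta>. {} \<subseteq> \<alpha> \<and> \<alpha> \<subseteq> \<beta> \<and> \<beta> \<subseteq> M \<longrightarrow>
      (card (\<beta> - \<alpha>) \<le> k \<and> code_interval \<alpha> \<beta> \<subseteq> D \<longrightarrow>
       (\<exists>y. transversal_point M c r \<alpha> \<beta> y \<and> e < dist p y))"
  proof (rule eventually_all_subintervals[OF fin])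
    fix \<alpha> \<beta> :: "nat set" assume "\<alpha> \<subseteq> \<beta>"
    show "\<forall>\<^sub>F e in at_right 0. card (\<beta> - \<alpha>) \<le> k \<and> code_interval \<alpha> \<beta> \<subseteq> D \<longrightarrow>
       (\<exists>y. transversal_point M c r \<alpha> \<beta> y \<and> e < dist p y)"
    proof (cases "card (\<beta> - \<alpha>) \<le> k \<and> code_interval \<alpha> \<beta> \<subseteq> D")
      case True
      then obtain x where "transversal_point M c r \<alpha> \<beta> x"
        using pierced_realizationD(4)[OF real \<open>\<alpha> \<subseteq> \<beta>\<close>] by blast
      moreover have "card (\<beta> - \<alpha>) < DIM('a)" using True dim by simp
      ultimately have "\<forall>\<^sub>F e in at_right 0. \<exists>y. transversal_point M c r \<alpha> \<beta> y \<and> e < dist p y"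
        by (rule eventually_transversal_point_avoiding[OF fin])
      then show ?thesis by (rule eventually_mono) simp
    qed auto
  qed
  then show ?thesis by (rule eventually_mono) simp
qed

definition admissible_radius :: "nat \<Rightarrow> nat set set \<Rightarrow> nat set \<Rightarrow> (nat \<Rightarrow> 'a::euclidean_space) \<Rightarrow>
    (nat \<Rightarrow> real) \<Rightarrow> nat set \<Rightarrow> nat set \<Rightarrow> 'a \<Rightarrow> real \<Rightarrow> bool" where
  "admissible_radius k D M c r \<sigma> \<tau> p e \<longleftrightarrow> 0 < e \<and>
    (\<forall>j\<in>\<sigma>. dist (c j) p + e < r j) \<and> (\<forall>j\<in>M - \<tau>. r j + e < dist (c j) p) \<and>
    (\<forall>\<alpha> \<beta>. \<alpha> \<subseteq> \<beta> \<and> \<beta> \<subseteq> M \<and> card (\<beta> - \<alpha>) \<le> k \<and> code_interval \<alpha> \<beta> \<subseteq> D \<longrightarrow>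
       (\<exists>y. transversal_point M c r \<alpha> \<beta> y \<and> e < dist p y)) \<and>
    (\<forall>\<alpha> \<beta>. \<sigma> \<subseteq> \<alpha> \<and> \<alpha> \<subseteq> \<beta> \<and> \<beta> \<subseteq> \<tau> \<longrightarrow> (\<exists>u. norm u = 1 \<and>
       u \<notin> span ((\<lambda>j. p - c j) ` (\<tau> - \<sigma>)) \<and> transversal_point M c r \<alpha> \<beta> (p + e *\<^sub>R u))) \<and>
    (\<forall>S\<in>Pow M. S \<noteq> {} \<longrightarrow> (\<Inter>j\<in>S. sphere (c j) (r j)) \<inter> sphere p e = {} \<or>
       card S < DIM('a) \<and> is_dim_sphere (DIM('a) - card S - 1) ((\<Inter>j\<in>S. sphere (c j) (r j)) \<inter> sphere p e))"

lemma eventually_admissible_radius: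
  fixes c :: "nat \<Rightarrow> 'a::euclidean_space"
  assumes dim: "DIM('a) = k + 1" and fin: "finite M" and real: "pierced_realization k D M c r"
    and p: "transversal_point M c r \<sigma> \<tau> p" and card: "card (\<tau> - \<sigma>) \<le> k"
  shows "\<forall>\<^sub>F e in at_right 0. admissible_radius k D M c r \<sigma> \<tau> p e"
proof -
  have p': "\<sigma> \<subseteq> M" "\<tau> \<subseteq> M" "\<forall>j\<in>\<sigma>. dist (c j) p < r j" "\<forall>j\<in>M - \<tau>. r j < dist (c j) p"
    using p unfolding transversal_point_def by auto
  have lt: "card (\<tau> - \<sigma>) < DIM('a)" using card dim by simp
  have "\<forall>\<^sub>F e in at_right 0. \<forall>\<alpha> \<beta>. \<sigma> \<subseteq> \<alpha> \<and> \<alpha> \<subseteq> \<beta> \<and> \<beta> \<subseteq> \<tau> \<longrightarrow> (\<exists>u. norm u = 1 \<and>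
       u \<notin> span ((\<lambda>j. p - c j) ` (\<tau> - \<sigma>)) \<and> transversal_point M c r \<alpha> \<beta> (p + e *\<^sub>R u))"
    using fin p'(2)
    by (intro eventually_all_subintervals eventually_transversal_point_nearby[OF fin p lt])
      (auto intro: finite_subset)
  moreover have "\<forall>\<^sub>F e in at_right 0. \<forall>j\<in>\<sigma>. dist (c j) p + e < r j"
    using p'(1,3) fin by (intro eventually_add_less_finite) (auto intro: finite_subset)
  moreover have "\<forall>\<^sub>F e in at_right 0. \<forall>j\<in>M - \<tau>. r j + e < dist (c j) p"
    using p'(4) fin by (intro eventually_add_less_finite) auto
  moreover note eventually_spheres_Int_sphere[OF fin pierced_realizationD(3)[OF real] p lt]
    eventually_transversal_points_avoiding[OF dim fin real] eventually_at_right_less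
  ultimately show ?thesis
    unfolding admissible_radius_def by (simp add: eventually_conj_iff)
qed

locale piercing_step =
  fixes k :: nat and D :: "nat set set" and M \<sigma> \<tau> :: "nat set" and i :: nat
    and c :: "nat \<Rightarrow> 'a::euclidean_space" and r :: "nat \<Rightarrow> real" and p :: 'a and e :: real
  assumes dim: "DIM('a) = k + 1" and fin: "finite M" and i: "i \<notin> M" and D: "\<forall>\<gamma>\<in>D. \<gamma> \<subseteq> M"
    and \<sigma>\<tau>: "\<sigma> \<subseteq> \<tau>" and card: "card (\<tau> - \<sigma>) \<le> k"
    and real: "pierced_realization k D M c r" and p: "transversal_point M c r \<sigma> \<tau> p"
    and admissible: "admissible_radius k D M c r \<sigma> \<tau> p e"
begin

lemma small_radius:
  "0 < e" "\<forall>j\<in>\<sigma>. dist (c j) p + e < r j" "\<forall>j\<in>M - \<tau>. r j + e < dist (c j) p"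
  "\<forall>\<alpha> \<beta>. \<alpha> \<subseteq> \<beta> \<and> \<beta> \<subseteq> M \<and> card (\<beta> - \<alpha>) \<le> k \<and> code_interval \<alpha> \<beta> \<subseteq> D \<longrightarrow>
     (\<exists>y. transversal_point M c r \<alpha> \<beta> y \<and> e < dist p y)"
  "\<forall>\<alpha> \<beta>. \<sigma> \<subseteq> \<alpha> \<and> \<alpha> \<subseteq> \<beta> \<and> \<beta> \<subseteq> \<tau> \<longrightarrow> (\<exists>u. norm u = 1 \<and>
     u \<notin> span ((\<lambda>j. p - c j) ` (\<tau> - \<sigma>)) \<and> transversal_point M c r \<alpha> \<beta> (p + e *\<^sub>R u))"
  "\<forall>S\<in>Pow M. S \<noteq> {} \<longrightarrow> (\<Inter>j\<in>S. sphere (c j) (r j)) \<inter> sphere p e = {} \<or>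
     card S < DIM('a) \<and> is_dim_sphere (DIM('a) - card S - 1) ((\<Inter>j\<in>S. sphere (c j) (r j)) \<inter> sphere p e)"
  using admissible unfolding admissible_radius_def by simp_all

lemma interval_subsets: "\<tau> \<subseteq> M" "i \<notin> \<tau>" "\<sigma> \<subseteq> M"
  using p i \<sigma>\<tau> unfolding transversal_point_def by blast+

lemma transversal_point_exists:
  assumes ab: "\<alpha> \<subseteq> \<beta>" "card (\<beta> - \<alpha>) \<le> k"
    "code_interval \<alpha> \<beta> \<subseteq> D \<union> code_interval (insert i \<sigma>) (insert i \<tau>)"
  shows "\<exists>x. transversal_point (insert i M) (c(i := p)) (r(i := e)) \<alpha> \<beta> x"
proof -
  have lt: "card (\<tau> - \<sigma>) < DIM('a)" using card dim by simp
  have "\<forall>\<gamma>\<in>D. i \<notin> \<gamma>" using D i by blast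
  from ab(3) ab(1) this \<sigma>\<tau> interval_subsets(2) show ?thesis
  proof (cases rule: code_interval_subset_piercing_cases)
    case old
    then have "\<beta> \<in> D" using ab(1) unfolding code_interval_def by blast
    then have "\<beta> \<subseteq> M" using D by blast
    then obtain y where "transversal_point M c r \<alpha> \<beta> y" "e < dist p y"
      using small_radius(4)[rule_format, of \<alpha> \<beta>] ab(1,2) old(2) by blast
    then show ?thesis using transversal_point_fun_upd_outside[OF _ i] by blast
  next
    case inside
    then have "\<alpha> - {i} \<subseteq> \<beta> - {i}" and \<alpha>: "insert i (\<alpha> - {i}) = \<alpha>" and \<beta>: "insert i (\<beta> - {i}) = \<beta>"
      using ab(1) by auto
    then show ?thesis
      using exists_transversal_point_fun_upd_inside[OF fin p lt i small_radius(1) inside(2) _ inside(3)]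
      unfolding \<alpha> \<beta> by blast
  next
    case boundary
    then obtain u where "norm u = 1" "u \<notin> span ((\<lambda>j. p - c j) ` (\<tau> - \<sigma>))"
      "transversal_point M c r \<alpha> (\<beta> - {i}) (p + e *\<^sub>R u)"
      using small_radius(5)[rule_format, of \<alpha> "\<beta> - {i}"] ab(1) by blast
    from transversal_point_fun_upd_on_new_sphere[OF fin p i small_radius(1) boundary(3,4) this]
    show ?thesis unfolding insert_Diff[OF boundary(1)] by blast
  qed
qed

lemma pierced_realization_fun_upd:
  "pierced_realization k (D \<union> code_interval (insert i \<sigma>) (insert i \<tau>)) (insert i M)
    (c(i := p)) (r(i := e))"
proof -
  have "\<gamma> \<in> D \<union> code_interval (insert i \<sigma>) (insert i \<tau>) \<longleftrightarrow>
      atom_on (\<lambda>j. ball ((c(i := p)) j) ((r(i := e)) j)) (insert i M) \<gamma> \<noteq> {}"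
    if "\<gamma> \<subseteq> insert i M" for \<gamma>
  proof
    assume "\<gamma> \<in> D \<union> code_interval (insert i \<sigma>) (insert i \<tau>)"
    then have "code_interval \<gamma> \<gamma> \<subseteq> D \<union> code_interval (insert i \<sigma>) (insert i \<tau>)"
      unfolding code_interval_def by auto
    then obtain x where "transversal_point (insert i M) (c(i := p)) (r(i := e)) \<gamma> \<gamma> x"
      using transversal_point_exists[OF subset_refl] by auto
    then show "atom_on (\<lambda>j. ball ((c(i := p)) j) ((r(i := e)) j)) (insert i M) \<gamma> \<noteq> {}"
      using transversal_point_in_atom_on by blast
  next
    assume "atom_on (\<lambda>j. ball ((c(i := p)) j) ((r(i := e)) j)) (insert i M) \<gamma> \<noteq> {}"
    then show "\<gamma> \<in> D \<union> code_interval (insert i \<sigma>) (insert i \<tau>)"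
      using atom_on_fun_upd_nonempty_imp[OF _ i small_radius(2) interval_subsets(3) small_radius(3)
          that]
        pierced_realizationD(2)[OF real] by blast
  qed
  moreover have "well_formed_on (insert i M) (c(i := p)) (r(i := e))"
    using well_formed_on_fun_upd[OF fin pierced_realizationD(3)[OF real] i small_radius(1,6)] .
  moreover have "\<forall>j\<in>insert i M. 0 < (r(i := e)) j"
    using pierced_realizationD(1)[OF real] small_radius(1) by simp
  ultimately show ?thesis
    using transversal_point_exists unfolding pierced_realization_def by blast
qed

end

lemma pierced_realization_insert:
  fixes c :: "nat \<Rightarrow> 'a::euclidean_space"
  assumes dim: "DIM('a) = k + 1" and fin: "finite M" and i: "i \<notin> M" and D: "\<forall>\<gamma>\<in>D. \<gamma> \<subseteq> M"
    and \<sigma>\<tau>: "\<sigma> \<subseteq> \<tau>" "card (\<tau> - \<sigma>) \<le> k" "code_interval \<sigma> \<tau> \<subseteq> D"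
    and real: "pierced_realization k D M c r"
  shows "\<exists>(c' :: nat \<Rightarrow> 'a) r'.
    pierced_realization k (D \<union> code_interval (insert i \<sigma>) (insert i \<tau>)) (insert i M) c' r'"
proof -
  obtain p where p: "transversal_point M c r \<sigma> \<tau> p"
    using pierced_realizationD(4)[OF real \<sigma>\<tau>(1,2) \<sigma>\<tau>(3)] by blast
  obtain e where "admissible_radius k D M c r \<sigma> \<tau> p e"
    using eventually_at_right_0_ex[OF eventually_admissible_radius[OF dim fin real p \<sigma>\<tau>(2)]] by blast
  with assms p have "piercing_step k D M \<sigma> \<tau> i c r p e" by unfold_locales
  then show ?thesis using piercing_step.pierced_realization_fun_upd by blast
qed

lemma pierced_realization_empty_code:
  fixes c :: "nat \<Rightarrow> 'a::euclidean_space"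
  shows "pierced_realization k {{}} {} c r"
  unfolding pierced_realization_def
proof (intro conjI allI impI)
  fix \<alpha> \<beta> :: "nat set" assume "\<alpha> \<subseteq> \<beta> \<and> card (\<beta> - \<alpha>) \<le> k \<and> code_interval \<alpha> \<beta> \<subseteq> {{}}"
  then have "\<alpha> = {}" "\<beta> = {}" unfolding code_interval_def by auto
  then show "\<exists>x. transversal_point {} c r \<alpha> \<beta> x"
    unfolding transversal_point_def by (simp add: independent_empty)
qed (simp_all add: atom_on_def well_formed_on_def)

lemma pierced_realization_exists:
  assumes "k_inductively_pierced k C" "DIM('a::euclidean_space) = k + 1" "finite (\<Union>C)"
  shows "\<exists>(c :: nat \<Rightarrow> 'a) r. pierced_realization k C (\<Union>C) c r"
  using assms
proof (induction rule: k_inductively_pierced.induct)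
  case base
  then show ?case using pierced_realization_empty_code[of k "\<lambda>_. 0 :: 'a"] by auto
next
  case (step C i k')
  obtain \<sigma> \<tau> where \<sigma>\<tau>: "\<sigma> \<subseteq> \<tau>" "card (\<tau> - \<sigma>) = k'" "code_interval \<sigma> \<tau> \<subseteq> code_del C i"
    and C: "C = code_del C i \<union> code_interval (insert i \<sigma>) (insert i \<tau>)"
    using step.hyps(1) unfolding is_piercing_def by blast
  have "\<Union>(code_del C i) = \<Union>C - {i}" unfolding code_del_def by blast
  moreover have "i \<in> \<Union>C" using C \<sigma>\<tau>(1) unfolding code_interval_def by blast
  ultimately have N: "\<Union>C = insert i (\<Union>(code_del C i))" "i \<notin> \<Union>(code_del C i)" by auto
  obtain c :: "nat \<Rightarrow> 'a" and r where "pierced_realization k (code_del C i) (\<Union>(code_del C i)) c r"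
    using step.IH step.prems N by auto
  from pierced_realization_insert[OF step.prems(1) _ N(2) _ \<sigma>\<tau>(1) _ \<sigma>\<tau>(3) this]
  show ?case using C N step.prems(2) \<sigma>\<tau>(2) step.hyps(2) by (metis Union_upper finite_insert)
qed

lemma pierceable_at_transversal_point:
  fixes c :: "nat \<Rightarrow> 'a::euclidean_space"
  assumes "transversal_point {1..n} c r \<alpha> \<beta> x" "card (\<beta> - \<alpha>) < DIM('a)"
  shows "pierceable_at (\<lambda>i. ball (c i) (r i)) n \<alpha> \<beta> x"
  unfolding pierceable_at_def atom_def code_interval_def
  using transversal_point_islimpt_atom_on_iff[OF _ assms] by (simp add: atom_on_def)

theorem lemma3p4:
  fixes C :: "nat set set" and n k :: nat
  assumes "C \<subseteq> Pow {1..n}"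
    and "{} \<in> C"
    and "\<forall>i\<in>{1..n}. \<exists>c\<in>C. i \<in> c"
    and "\<forall>i\<in>{1..n}. \<forall>j\<in>{1..n}. i \<noteq> j \<longrightarrow> {c\<in>C. i \<in> c} \<noteq> {c\<in>C. j \<in> c}"
    and "k_inductively_pierced k C"
    and "DIM('a::euclidean_space) = k + 1"
  shows "\<exists>(c :: nat \<Rightarrow> 'a) (r :: nat \<Rightarrow> real).
           (\<forall>i\<in>{1..n}. 0 < r i) \<and>
           realizes (\<lambda>i. ball (c i) (r i)) n C \<and>
           well_formed_balls n c r \<and>
           (\<forall>\<alpha> \<beta>. \<alpha> \<subseteq> \<beta> \<and> card (\<beta> - \<alpha>) \<le> k \<and> code_interval \<alpha> \<beta> \<subseteq> C \<longrightarrow>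
              (\<exists>p. pierceable_at (\<lambda>i. ball (c i) (r i)) n \<alpha> \<beta> p))"
proof -
  \<comment> \<open>The conventions \<open>{} \<in> C\<close> and that distinct neurons lie in distinct codewords are not needed.\<close>
  have "\<Union>C = {1..n}" using assms(1,3) by blast
  then obtain c :: "nat \<Rightarrow> 'a" and r where real: "pierced_realization k C {1..n} c r"
    using pierced_realization_exists[OF assms(5,6)] by auto
  have "realizes (\<lambda>i. ball (c i) (r i)) n C"
    unfolding realizes_def atom_def using pierced_realizationD(2)[OF real] assms(1)
    by (auto simp: atom_on_def)
  moreover have "well_formed_balls n c r"
    using pierced_realizationD(3)[OF real] unfolding well_formed_balls_def well_formed_on_def .
  moreover have "\<exists>p. pierceable_at (\<lambda>i. ball (c i) (r i)) n \<alpha> \<beta> p"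
    if "\<alpha> \<subseteq> \<beta>" "card (\<beta> - \<alpha>) \<le> k" "code_interval \<alpha> \<beta> \<subseteq> C" for \<alpha> \<beta>
    using pierced_realizationD(4)[OF real that] pierceable_at_transversal_point that(2) assms(6)
    by (metis less_add_one le_less_trans)
  ultimately show ?thesis using pierced_realizationD(1)[OF real] by blast
qed

end
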